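(* For every integral domain $D$ and semistar operation $\star$ on $D$, $$\widetilde{\star}\text{-}\dim_v(D)=\sup\{\dim_v(D_P)\mid P\in\operatorname{QSpec}^{\widetilde{\star}}(D)\}.$$
   Context: $D$ is an integral domain with quotient field $K$; $f(D)$ denotes the nonzero finitely generated fractional ideals, $\overline{\mathcal F}(D)$ the nonzero $D$-submodules of $K$. A semistar operation $\star$ on $D$ is a map $\overline{\mathcal F}(D)\to\overline{\mathcal F}(D)$ with $(xE)^\star=xE^\star$ ($0\neq x\in K$), $E\subseteq F\Rightarrow E^\star\subseteq F^\star$, $E\subseteq E^\star=(E^\star)^\star$. $E^{\star_f}:=\bigcup\{F^\star:F\in f(D),F\subseteq E\}$. A nonzero ideal $I$ is a quasi-$\star$-ideal if $I^\star\cap D=I$; quasi-$\star$-primes/quasi-$\star$-maximal ideals are the prime ones / maximal proper ones; sets $\operatorname{QSpec}^\star(D)$, $\operatorname{QMax}^\star(D)$. $E^{\widetilde\star}:=\bigcap\{ED_M:M\in\operatorname{QMax}^{\star_f}(D)\}$ ($=K$ if empty). A valuation overring $V$ of $D$ is a $\star$-valuation overring if $F^\star\subseteq FV$ for all $F\in f(D)$. $\star$-$\dim_v(D):=\sup\{\dim V: V\text{ a }\star\text{-valuation overring of }D\}$, and $\dim_v(R)$ is the classical valuative dimension (supremum of dimensions of valuation overrings of $R$). *)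

theory Defs
  imports Main "HOL-Library.Extended_Nat"
begin

(* The quotient field K of D is modelled as a type 'k :: field; D is a subring
   of K such that every element of K is a quotient of elements of D. *)

definition subring :: "'k::field set \<Rightarrow> bool" where
  "subring R \<longleftrightarrow> 0 \<in> R \<and> 1 \<in> R \<and>
     (\<forall>a\<in>R. \<forall>b\<in>R. a + b \<in> R \<and> a * b \<in> R \<and> - a \<in> R)"

definition domain_with_qf :: "'k::field set \<Rightarrow> bool" where
  "domain_with_qf D \<longleftrightarrow> subring D \<and> (\<forall>x. \<exists>a\<in>D. \<exists>b\<in>D. b \<noteq> 0 \<and> x = a / b)"

definition submodule :: "'k::field set \<Rightarrow> 'k set \<Rightarrow> bool" where
  "submodule D E \<longleftrightarrow> 0 \<in> E \<and> (\<forall>a\<in>E. \<forall>b\<in>E. a + b \<in> E) \<and> (\<forall>d\<in>D. \<forall>a\<in>E. d * a \<in> E)"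

definition Fbar :: "'k::field set \<Rightarrow> 'k set set" where
  "Fbar D = {E. submodule D E \<and> E \<noteq> {0}}"

(* R-submodule of K generated by S (for S = F, R = V this is FV) *)
definition gen_mod :: "'k::field set \<Rightarrow> 'k set \<Rightarrow> 'k set" where
  "gen_mod R S = {(\<Sum>i<(n::nat). r i * s i) | n r s. \<forall>i<n. r i \<in> R \<and> s i \<in> S}"

definition fgset :: "'k::field set \<Rightarrow> 'k set set" where
  "fgset D = {E \<in> Fbar D. \<exists>S. finite S \<and> E = gen_mod D S}"

definition smult :: "'k::field \<Rightarrow> 'k set \<Rightarrow> 'k set" where
  "smult x E = (\<lambda>e. x * e) ` E"

definition semistar :: "'k::field set \<Rightarrow> ('k set \<Rightarrow> 'k set) \<Rightarrow> bool" where
  "semistar D st \<longleftrightarrow>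
     (\<forall>E\<in>Fbar D. st E \<in> Fbar D) \<and>
     (\<forall>E\<in>Fbar D. \<forall>x. x \<noteq> 0 \<longrightarrow> st (smult x E) = smult x (st E)) \<and>
     (\<forall>E\<in>Fbar D. \<forall>F\<in>Fbar D. E \<subseteq> F \<longrightarrow> st E \<subseteq> st F) \<and>
     (\<forall>E\<in>Fbar D. E \<subseteq> st E \<and> st (st E) = st E)"

definition star_f :: "'k::field set \<Rightarrow> ('k set \<Rightarrow> 'k set) \<Rightarrow> 'k set \<Rightarrow> 'k set" where
  "star_f D st E = \<Union>{st F | F. F \<in> fgset D \<and> F \<subseteq> E}"

definition ideal_of :: "'k::field set \<Rightarrow> 'k set \<Rightarrow> bool" where
  "ideal_of R I \<longleftrightarrow> I \<subseteq> R \<and> submodule R I"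

definition prime_ideal :: "'k::field set \<Rightarrow> 'k set \<Rightarrow> bool" where
  "prime_ideal R P \<longleftrightarrow> ideal_of R P \<and> 1 \<notin> P \<and>
     (\<forall>a\<in>R. \<forall>b\<in>R. a * b \<in> P \<longrightarrow> a \<in> P \<or> b \<in> P)"

definition quasi_ideal :: "'k::field set \<Rightarrow> ('k set \<Rightarrow> 'k set) \<Rightarrow> 'k set \<Rightarrow> bool" where
  "quasi_ideal D st I \<longleftrightarrow> ideal_of D I \<and> I \<noteq> {0} \<and> st I \<inter> D = I"

definition QSpec :: "'k::field set \<Rightarrow> ('k set \<Rightarrow> 'k set) \<Rightarrow> 'k set set" where
  "QSpec D st = {P. quasi_ideal D st P \<and> prime_ideal D P}"

definition QMax :: "'k::field set \<Rightarrow> ('k set \<Rightarrow> 'k set) \<Rightarrow> 'k set set" where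
  "QMax D st = {M. quasi_ideal D st M \<and> M \<noteq> D \<and>
      (\<forall>N. quasi_ideal D st N \<and> N \<noteq> D \<and> M \<subseteq> N \<longrightarrow> N = M)}"

definition localization :: "'k::field set \<Rightarrow> 'k set \<Rightarrow> 'k set" where
  "localization D P = {a / s | a s. a \<in> D \<and> s \<in> D \<and> s \<notin> P}"

definition ext_loc :: "'k::field set \<Rightarrow> 'k set \<Rightarrow> 'k set \<Rightarrow> 'k set" where
  "ext_loc D M E = {e / s | e s. e \<in> E \<and> s \<in> D \<and> s \<notin> M}"

(* \<star> tilde; the intersection over the empty family is UNIV = K *)
definition tilde :: "'k::field set \<Rightarrow> ('k set \<Rightarrow> 'k set) \<Rightarrow> 'k set \<Rightarrow> 'k set" where
  "tilde D st E = \<Inter>{ext_loc D M E | M. M \<in> QMax D (star_f D st)}"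

definition valuation_overring :: "'k::field set \<Rightarrow> 'k set \<Rightarrow> bool" where
  "valuation_overring R V \<longleftrightarrow> subring V \<and> R \<subseteq> V \<and>
     (\<forall>x. x \<noteq> 0 \<longrightarrow> x \<in> V \<or> inverse x \<in> V)"

definition star_valuation_overring :: "'k::field set \<Rightarrow> ('k set \<Rightarrow> 'k set) \<Rightarrow> 'k set \<Rightarrow> bool" where
  "star_valuation_overring D st V \<longleftrightarrow> valuation_overring D V \<and>
     (\<forall>F\<in>fgset D. st F \<subseteq> gen_mod V F)"

definition krull_dim :: "'k::field set \<Rightarrow> enat" where
  "krull_dim R = Sup {enat n | n. \<exists>c. (\<forall>i\<le>n. prime_ideal R (c i)) \<and> (\<forall>i<n. c i \<subset> c (Suc i))}"

definition star_dim_v :: "'k::field set \<Rightarrow> ('k set \<Rightarrow> 'k set) \<Rightarrow> enat" where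
  "star_dim_v D st = (SUP V \<in> {V. star_valuation_overring D st V}. krull_dim V)"

definition dim_v :: "'k::field set \<Rightarrow> enat" where
  "dim_v R = (SUP V \<in> {V. valuation_overring R V}. krull_dim V)"

end

theory Submission
  imports Defs
begin

(* (a) If P is a quasi-~-prime, then P lies in a quasi-\<star>_f-maximal ideal M,
       hence D_M \<subseteq> D_P, and every valuation overring V of D_P satisfies
       F^~ \<subseteq> F D_M \<subseteq> F V; so V is a ~-valuation overring of D.
   (b) Conversely, let V \<noteq> K be a ~-valuation overring with maximal ideal N and
       center Q = N \<inter> D.  Q is a nonzero prime with D_Q \<subseteq> V; the condition
       F^~ \<subseteq> FV forces 1 \<notin> F^\<star> for finitely generated F \<subseteq> Q, so by Zorn Q lies
       in a quasi-\<star>_f-maximal ideal, and this makes Q a quasi-~-prime.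
       The ring V = K itself has dimension 0 and contributes nothing. *)

lemma gen_mod_iff:
  "x \<in> gen_mod R S \<longleftrightarrow> (\<exists>n r s. x = (\<Sum>i<(n::nat). r i * s i) \<and> (\<forall>i<n. r i \<in> R \<and> s i \<in> S))"
  unfolding gen_mod_def by blast

lemma gen_mod_0: "0 \<in> gen_mod R S"
  unfolding gen_mod_iff by (rule exI[of _ 0]) auto

lemma gen_mod_add_term:
  assumes "x \<in> gen_mod R S" "a \<in> R" "b \<in> S"
  shows "x + a * b \<in> gen_mod R S"
proof -
  obtain n :: nat and r s where x: "x = (\<Sum>i<n. r i * s i)" and rs: "\<forall>i<n. r i \<in> R \<and> s i \<in> S"
    using assms(1) unfolding gen_mod_iff by blast
  have "(\<Sum>i<n. (r(n:=a)) i * (s(n:=b)) i) = (\<Sum>i<n. r i * s i)" by (rule sum.cong) auto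
  then have "x + a * b = (\<Sum>i<Suc n. (r(n:=a)) i * (s(n:=b)) i)" using x by simp
  moreover have "\<forall>i<Suc n. (r(n:=a)) i \<in> R \<and> (s(n:=b)) i \<in> S" using rs assms by (auto simp: less_Suc_eq)
  ultimately show ?thesis unfolding gen_mod_iff by blast
qed

lemma gen_mod_single: "a \<in> R \<Longrightarrow> b \<in> S \<Longrightarrow> a * b \<in> gen_mod R S"
  using gen_mod_add_term[OF gen_mod_0] by fastforce

lemma generator_in_gen_mod: "1 \<in> R \<Longrightarrow> b \<in> S \<Longrightarrow> b \<in> gen_mod R S"
  using gen_mod_single[of 1 R b S] by simp

lemma gen_mod_add:
  assumes "x \<in> gen_mod R S" "y \<in> gen_mod R S"
  shows "x + y \<in> gen_mod R S"
proof -
  obtain m :: nat and r s where y: "y = (\<Sum>i<m. r i * s i)" and rs: "\<forall>i<m. r i \<in> R \<and> s i \<in> S"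
    using assms(2) unfolding gen_mod_iff by blast
  have "x + (\<Sum>i<k. r i * s i) \<in> gen_mod R S" if "k \<le> m" for k
    using that
  proof (induction k)
    case 0 then show ?case using assms(1) by simp
  next
    case (Suc k)
    then have "(x + (\<Sum>i<k. r i * s i)) + r k * s k \<in> gen_mod R S"
      using rs by (intro gen_mod_add_term) auto
    then show ?case by (simp add: add.assoc)
  qed
  then show ?thesis using y by blast
qed

lemma gen_mod_mult:
  assumes "subring R" "d \<in> R" "x \<in> gen_mod R S"
  shows "d * x \<in> gen_mod R S"
proof -
  obtain n :: nat and r s where x: "x = (\<Sum>i<n. r i * s i)" and rs: "\<forall>i<n. r i \<in> R \<and> s i \<in> S"
    using assms(3) unfolding gen_mod_iff by blast
  have "d * x = (\<Sum>i<n. (d * r i) * s i)" using x by (simp add: sum_distrib_left mult.assoc)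
  moreover have "\<forall>i<n. d * r i \<in> R \<and> s i \<in> S" using rs assms(1,2) unfolding subring_def by blast
  ultimately show ?thesis unfolding gen_mod_iff
    by (intro exI[of _ n] exI[of _ "\<lambda>i. d * r i"] exI[of _ s]) simp
qed

lemma submodule_gen_mod: "subring R \<Longrightarrow> submodule R (gen_mod R S)"
  unfolding submodule_def using gen_mod_0 gen_mod_add gen_mod_mult by blast

lemma gen_mod_least:
  assumes "submodule R E" "S \<subseteq> E"
  shows "gen_mod R S \<subseteq> E"
proof
  fix x assume "x \<in> gen_mod R S"
  then obtain n :: nat and r s where x: "x = (\<Sum>i<n. r i * s i)" and rs: "\<forall>i<n. r i \<in> R \<and> s i \<in> S"
    unfolding gen_mod_iff by blast
  have "(\<Sum>i<k. r i * s i) \<in> E" if "k \<le> n" for k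
    using that
  proof (induction k)
    case 0 then show ?case using assms(1) unfolding submodule_def by simp
  next
    case (Suc k)
    then have "(\<Sum>i<k. r i * s i) \<in> E" and "r k \<in> R" "s k \<in> S" using rs by auto
    then have "(\<Sum>i<k. r i * s i) \<in> E" "r k * s k \<in> E"
      using assms unfolding submodule_def by auto
    then show ?case using assms(1) unfolding submodule_def by simp
  qed
  then show "x \<in> E" using x by blast
qed

lemma submodule_Int: "submodule R A \<Longrightarrow> submodule R B \<Longrightarrow> submodule R (A \<inter> B)"
  unfolding submodule_def by blast

lemma subring_submodule: "subring R \<Longrightarrow> submodule R R"
  unfolding subring_def submodule_def by blast

lemma submodule_chain_Union:
  assumes "C \<noteq> {}" "subset.chain A C" "\<And>J. J \<in> C \<Longrightarrow> submodule R J"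
  shows "submodule R (\<Union>C)"
proof -
  have add: "a + b \<in> \<Union>C" if ab: "a \<in> \<Union>C" "b \<in> \<Union>C" for a b
  proof -
    obtain J1 J2 where J: "J1 \<in> C" "J2 \<in> C" "a \<in> J1" "b \<in> J2" using ab by blast
    then have "J1 \<subseteq> J2 \<or> J2 \<subseteq> J1" using assms(2) by (auto simp: subset.chain_def)
    then show ?thesis using J assms(3)[OF J(1)] assms(3)[OF J(2)] unfolding submodule_def by blast
  qed
  have zero: "0 \<in> \<Union>C" using assms(1,3) unfolding submodule_def by blast
  have mult: "d * a \<in> \<Union>C" if "d \<in> R" "a \<in> \<Union>C" for d a
    using that assms(3) unfolding submodule_def by blast
  show ?thesis unfolding submodule_def using zero add mult by blast
qed

lemma ideal_one_eq:
  assumes "ideal_of R J" "1 \<in> J"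
  shows "J = R"
  using assms unfolding ideal_of_def submodule_def by (metis mult.right_neutral subsetI subset_antisym)

lemma subset_localization:
  assumes "subring D" "1 \<notin> P"
  shows "D \<subseteq> localization D P"
proof
  fix d assume "d \<in> D"
  have "d = d / 1" by simp
  then show "d \<in> localization D P"
    unfolding localization_def using \<open>d \<in> D\<close> assms unfolding subring_def by blast
qed

section \<open>Valuation rings and their centers\<close>

text \<open>The maximal ideal of a valuation ring: its non-units.\<close>
definition nonunits :: "'k::field set \<Rightarrow> 'k set" where
  "nonunits V = {x \<in> V. x = 0 \<or> inverse x \<notin> V}"

lemma one_notin_nonunits: "subring V \<Longrightarrow> 1 \<notin> nonunits V"
  unfolding nonunits_def subring_def by simp

lemma nonunits_mult:
  assumes V: "subring V" and "v \<in> V" "a \<in> nonunits V"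
  shows "v * a \<in> nonunits V"
proof (cases "v * a = 0")
  case True
  have "0 \<in> nonunits V" using V unfolding nonunits_def subring_def by simp
  then show ?thesis using True by metis
next
  case False
  then have nz: "v \<noteq> 0" "a \<noteq> 0" by auto
  have "inverse (v * a) \<notin> V"
  proof
    assume "inverse (v * a) \<in> V"
    then have "v * inverse (v * a) \<in> V" using V \<open>v \<in> V\<close> unfolding subring_def by blast
    moreover have "v * inverse (v * a) = inverse a" using nz by (simp add: field_simps)
    ultimately have "inverse a \<in> V" by metis
    then show False using assms(3) nz unfolding nonunits_def by simp
  qed
  then show ?thesis using V assms(2,3) unfolding nonunits_def subring_def by simp
qed

text \<open>Closure under addition uses that V is a valuation ring: of two nonzero
  elements one divides the other.\<close>
lemma nonunits_add:
  assumes V: "subring V" and val: "\<And>x. x \<noteq> 0 \<Longrightarrow> x \<in> V \<or> inverse x \<in> V"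
    and a: "a \<in> nonunits V" and b: "b \<in> nonunits V"
  shows "a + b \<in> nonunits V"
proof -
  have ab: "a \<in> V" "b \<in> V" "a + b \<in> V" using a b V unfolding nonunits_def subring_def by auto
  have V1: "1 \<in> V" and Vadd: "\<And>x y. x \<in> V \<Longrightarrow> y \<in> V \<Longrightarrow> x + y \<in> V"
    and Vmul: "\<And>x y. x \<in> V \<Longrightarrow> y \<in> V \<Longrightarrow> x * y \<in> V" using V unfolding subring_def by auto
  show ?thesis
  proof (rule ccontr)
    assume "a + b \<notin> nonunits V"
    then have inv: "inverse (a + b) \<in> V" and nz: "a + b \<noteq> 0" using ab unfolding nonunits_def by auto
    then have "a \<noteq> 0" "b \<noteq> 0" using a b unfolding nonunits_def by auto
    with val[of "a / b"] have "a / b \<in> V \<or> b / a \<in> V" by simp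
    then show False
    proof
      assume "a / b \<in> V"
      moreover have "inverse b = inverse (a + b) * (1 + a / b)" using nz \<open>b \<noteq> 0\<close> by (simp add: field_simps)
      ultimately have "inverse b \<in> V" using inv V1 Vadd Vmul by metis
      then show False using b \<open>b \<noteq> 0\<close> unfolding nonunits_def by blast
    next
      assume "b / a \<in> V"
      moreover have "inverse a = inverse (a + b) * (1 + b / a)" using nz \<open>a \<noteq> 0\<close> by (simp add: field_simps)
      ultimately have "inverse a \<in> V" using inv V1 Vadd Vmul by metis
      then show False using a \<open>a \<noteq> 0\<close> unfolding nonunits_def by blast
    qed
  qed
qed

lemma nonunits_submodule:
  assumes "subring V" "\<And>x. x \<noteq> 0 \<Longrightarrow> x \<in> V \<or> inverse x \<in> V"
  shows "submodule V (nonunits V)"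
proof -
  have "0 \<in> nonunits V" using assms(1) unfolding nonunits_def subring_def by simp
  then show ?thesis unfolding submodule_def using nonunits_add[OF assms] nonunits_mult[OF assms(1)] by blast
qed

lemma center_prime:
  assumes V: "subring V" "\<And>x. x \<noteq> 0 \<Longrightarrow> x \<in> V \<or> inverse x \<in> V"
    and D: "subring D" "D \<subseteq> V"
  shows "prime_ideal D (nonunits V \<inter> D)"
  unfolding prime_ideal_def
proof (intro conjI ballI impI)
  have "submodule D (nonunits V)"
    using nonunits_submodule[OF V] D unfolding submodule_def by blast
  then show "ideal_of D (nonunits V \<inter> D)"
    unfolding ideal_of_def using submodule_Int subring_submodule[OF D(1)] by blast
  show "1 \<notin> nonunits V \<inter> D" using one_notin_nonunits[OF V(1)] by blast
next
  fix a b assume ab: "a \<in> D" "b \<in> D" "a * b \<in> nonunits V \<inter> D"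
  show "a \<in> nonunits V \<inter> D \<or> b \<in> nonunits V \<inter> D"
  proof (rule ccontr)
    assume "\<not> ?thesis"
    then have "a \<noteq> 0" "b \<noteq> 0" "inverse a \<in> V" "inverse b \<in> V"
      using ab D(2) unfolding nonunits_def by auto
    then have "inverse (a * b) \<in> V" "a * b \<noteq> 0"
      using V(1) unfolding subring_def by (auto simp: mult.commute)
    then show False using ab(3) unfolding nonunits_def by blast
  qed
qed

lemma localization_center_subset:
  assumes V: "subring V" and D: "D \<subseteq> V"
  shows "localization D (nonunits V \<inter> D) \<subseteq> V"
proof
  fix y assume "y \<in> localization D (nonunits V \<inter> D)"
  then obtain a s where as: "y = a / s" "a \<in> D" "s \<in> D" "s \<notin> nonunits V"
    unfolding localization_def by blast
  then have "inverse s \<in> V" using D unfolding nonunits_def by auto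
  then show "y \<in> V" using as D V unfolding subring_def by (auto simp: divide_inverse)
qed

lemma center_zero_UNIV:
  assumes V: "subring V" and D: "domain_with_qf D" "D \<subseteq> V"
    and Q0: "nonunits V \<inter> D = {0}"
  shows "V = UNIV"
proof -
  have "x \<in> V" for x
  proof -
    obtain a b where ab: "a \<in> D" "b \<in> D" "b \<noteq> 0" "x = a / b"
      using D(1) unfolding domain_with_qf_def by blast
    then have "y \<in> localization D (nonunits V \<inter> D)" if "y = a / b" for y
      using that Q0 unfolding localization_def by blast
    then show ?thesis using localization_center_subset[OF V D(2)] ab by blast
  qed
  then show ?thesis by blast
qed

text \<open>A field has Krull dimension 0: its only prime ideal is zero.\<close>
lemma krull_dim_field: "krull_dim (UNIV :: 'k::field set) \<le> 0"
proof -
  have prime_zero: "P = {0}" if "prime_ideal (UNIV::'k set) P" for P :: "'k set"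
  proof -
    have s: "submodule UNIV P" using that unfolding prime_ideal_def ideal_of_def by blast
    have "p = 0" if "p \<in> P" for p
    proof (rule ccontr)
      assume "p \<noteq> 0"
      then have "inverse p * p = 1" by simp
      moreover have "inverse p * p \<in> P" using s \<open>p \<in> P\<close> unfolding submodule_def by blast
      ultimately show False using \<open>prime_ideal UNIV P\<close> unfolding prime_ideal_def by simp
    qed
    then show "P = {0}" using s unfolding submodule_def by blast
  qed
  show ?thesis unfolding krull_dim_def
  proof (rule Sup_least)
    fix x assume "x \<in> {enat n |n. \<exists>c. (\<forall>i\<le>n. prime_ideal (UNIV::'k set) (c i)) \<and> (\<forall>i<n. c i \<subset> c (Suc i))}"
    then obtain n c where x: "x = enat n" and c: "\<forall>i\<le>n. prime_ideal (UNIV::'k set) (c i)" "\<forall>i<n. c i \<subset> c (Suc i)"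
      by blast
    show "x \<le> 0"
    proof (cases n)
      case 0 then show ?thesis using x by (simp add: zero_enat_def)
    next
      case (Suc m)
      have "c 0 = {0}" "c (Suc 0) = {0}" using c(1) prime_zero Suc by auto
      moreover have "c 0 \<subset> c (Suc 0)" using c(2) Suc by auto
      ultimately show ?thesis by simp
    qed
  qed
qed

locale semistar_domain =
  fixes D :: "'k::field set" and st :: "'k set \<Rightarrow> 'k set"
  assumes domain: "domain_with_qf D" and semistar: "semistar D st"
begin

lemma subring_D: "subring D" using domain unfolding domain_with_qf_def by blast
lemma one_in_D: "1 \<in> D" using subring_D unfolding subring_def by blast

lemma st_Fbar: "F \<in> Fbar D \<Longrightarrow> st F \<in> Fbar D"
  using semistar unfolding semistar_def by (elim conjE) (rule bspec)
lemma st_ext: "F \<in> Fbar D \<Longrightarrow> F \<subseteq> st F"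
  using semistar unfolding semistar_def by (elim conjE) (auto dest: bspec)
lemma st_mono: "F \<in> Fbar D \<Longrightarrow> G \<in> Fbar D \<Longrightarrow> F \<subseteq> G \<Longrightarrow> st F \<subseteq> st G"
  using semistar unfolding semistar_def by (elim conjE) (auto dest: bspec)
lemma st_idem: "F \<in> Fbar D \<Longrightarrow> st (st F) = st F"
  using semistar unfolding semistar_def by (elim conjE) (auto dest: bspec)
lemma st_submodule: "F \<in> Fbar D \<Longrightarrow> submodule D (st F)"
  using st_Fbar unfolding Fbar_def by blast

lemma fg_Fbar: "F \<in> fgset D \<Longrightarrow> F \<in> Fbar D"
  unfolding fgset_def by blast

lemma fg_intro:
  assumes "finite S" "s \<in> S" "s \<noteq> 0"
  shows "gen_mod D S \<in> fgset D"
proof -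
  have "gen_mod D S \<noteq> {0}" using generator_in_gen_mod[OF one_in_D assms(2)] assms(3) by blast
  then show ?thesis unfolding fgset_def Fbar_def using submodule_gen_mod[OF subring_D] assms(1) by blast
qed

lemma fg_generators:
  assumes "F \<in> fgset D"
  obtains S where "finite S" "F = gen_mod D S" "S \<subseteq> F"
  using assms generator_in_gen_mod[OF one_in_D] unfolding fgset_def by blast

lemma star_f_iff: "x \<in> star_f D st E \<longleftrightarrow> (\<exists>F. F \<in> fgset D \<and> F \<subseteq> E \<and> x \<in> st F)"
  unfolding star_f_def by blast

lemma principal_fg_below:
  assumes "submodule D J" "y \<in> J" "y \<noteq> 0"
  shows "gen_mod D {y} \<in> fgset D" "gen_mod D {y} \<subseteq> J"
  using fg_intro[of "{y}" y] gen_mod_least[OF assms(1)] assms by auto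

lemma subset_star_f:
  assumes J: "submodule D J" "J \<noteq> {0}"
  shows "J \<subseteq> star_f D st J"
proof
  fix x assume x: "x \<in> J"
  obtain j where j: "j \<in> J" "j \<noteq> 0" using J unfolding submodule_def by blast
  define y where "y = (if x = 0 then j else x)"
  have y: "y \<in> J" "y \<noteq> 0" using j x unfolding y_def by auto
  note F = principal_fg_below[OF J(1) y]
  have "y \<in> st (gen_mod D {y})" "0 \<in> st (gen_mod D {y})"
    using generator_in_gen_mod[OF one_in_D, of y "{y}"] st_ext[OF fg_Fbar[OF F(1)]]
      st_submodule[OF fg_Fbar[OF F(1)]] unfolding submodule_def by auto
  then have "x \<in> st (gen_mod D {y})" unfolding y_def by (cases "x = 0") auto
  then show "x \<in> star_f D st J" unfolding star_f_iff using F by blast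
qed

lemma star_f_directed:
  assumes Q: "submodule D Q" "Q \<noteq> {0}" and fin: "finite S"
  shows "S \<subseteq> star_f D st Q \<Longrightarrow> \<exists>G\<in>fgset D. G \<subseteq> Q \<and> S \<subseteq> st G"
  using fin
proof (induction S rule: finite_induct)
  case empty
  obtain q where "q \<in> Q" "q \<noteq> 0" using Q unfolding submodule_def by blast
  then show ?case using principal_fg_below[OF Q(1)] by blast
next
  case (insert s S)
  have "S \<subseteq> star_f D st Q" using insert.prems by simp
  then obtain G2 where G2: "G2 \<in> fgset D" "G2 \<subseteq> Q" "S \<subseteq> st G2" using insert.IH by auto
  have "s \<in> star_f D st Q" using insert.prems by simp
  then obtain G1 where G1: "G1 \<in> fgset D" "G1 \<subseteq> Q" "s \<in> st G1" unfolding star_f_iff by blast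
  obtain S1 where S1: "finite S1" "G1 = gen_mod D S1" "S1 \<subseteq> G1" using fg_generators[OF G1(1)] by blast
  obtain S2 where S2: "finite S2" "G2 = gen_mod D S2" "S2 \<subseteq> G2" using fg_generators[OF G2(1)] by blast
  define G where "G = gen_mod D (S1 \<union> S2)"
  have subG: "submodule D G" unfolding G_def by (rule submodule_gen_mod[OF subring_D])
  have "S1 \<subseteq> G" "S2 \<subseteq> G" unfolding G_def using generator_in_gen_mod[OF one_in_D] by blast+
  then have G12: "G1 \<subseteq> G" "G2 \<subseteq> G" unfolding S1(2) S2(2) by (simp_all add: gen_mod_least[OF subG])
  have "S1 \<union> S2 \<subseteq> Q" using S1(3) S2(3) G1(2) G2(2) by blast
  then have GQ: "G \<subseteq> Q" unfolding G_def by (rule gen_mod_least[OF Q(1)])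
  have "G1 \<noteq> {0}" "0 \<in> G1" using fg_Fbar[OF G1(1)] unfolding Fbar_def submodule_def by auto
  then have "G \<noteq> {0}" using G12(1) by blast
  moreover have "finite (S1 \<union> S2)" using S1(1) S2(1) by simp
  ultimately have Gfg: "G \<in> fgset D" unfolding fgset_def Fbar_def using subG G_def by blast
  have "st G1 \<subseteq> st G" "st G2 \<subseteq> st G"
    using st_mono[OF fg_Fbar[OF G1(1)] fg_Fbar[OF Gfg] G12(1)]
      st_mono[OF fg_Fbar[OF G2(1)] fg_Fbar[OF Gfg] G12(2)] .
  then have "insert s S \<subseteq> st G" using G1(3) G2(3) by blast
  then show ?case using Gfg GQ by blast
qed

lemma star_f_submodule:
  assumes Q: "submodule D Q" "Q \<noteq> {0}"
  shows "submodule D (star_f D st Q)"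
proof -
  have add: "a + b \<in> star_f D st Q" if ab: "a \<in> star_f D st Q" "b \<in> star_f D st Q" for a b
  proof -
    obtain G where G: "G \<in> fgset D" "G \<subseteq> Q" "{a, b} \<subseteq> st G"
      using star_f_directed[OF Q, of "{a, b}"] ab by auto
    then have "a + b \<in> st G" using st_submodule[OF fg_Fbar[OF G(1)]] unfolding submodule_def by blast
    then show ?thesis unfolding star_f_iff using G by blast
  qed
  have mult: "d * a \<in> star_f D st Q" if "d \<in> D" "a \<in> star_f D st Q" for d a
    using that st_submodule fg_Fbar unfolding star_f_iff submodule_def by blast
  have "0 \<in> star_f D st Q" using subset_star_f[OF Q] Q(1) unfolding submodule_def by blast
  then show ?thesis unfolding submodule_def using add mult by blast
qed

text \<open>\<star>_f is idempotent in the form needed below: (E)^{\<star>_f} \<subseteq> Q^{\<star>_f} when E \<subseteq> Q^{\<star>_f}.\<close>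
lemma star_f_star_f_subset:
  assumes Q: "submodule D Q" "Q \<noteq> {0}" and E: "E \<subseteq> star_f D st Q"
  shows "star_f D st E \<subseteq> star_f D st Q"
proof
  fix x assume "x \<in> star_f D st E"
  then obtain F where F: "F \<in> fgset D" "F \<subseteq> E" "x \<in> st F" unfolding star_f_iff by blast
  obtain S where S: "finite S" "F = gen_mod D S" "S \<subseteq> F" using fg_generators[OF F(1)] by blast
  obtain G where G: "G \<in> fgset D" "G \<subseteq> Q" "S \<subseteq> st G"
    using star_f_directed[OF Q S(1)] S(3) F(2) E by blast
  have "F \<subseteq> st G" unfolding S(2) by (rule gen_mod_least[OF st_submodule[OF fg_Fbar[OF G(1)]] G(3)])
  then have "st F \<subseteq> st G" using st_mono[OF fg_Fbar[OF F(1)] st_Fbar[OF fg_Fbar[OF G(1)]]]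
    st_idem[OF fg_Fbar[OF G(1)]] by simp
  then have "x \<in> st G" using F(3) by blast
  then show "x \<in> star_f D st Q" unfolding star_f_iff using G(1,2) by blast
qed

lemma QMax_props:
  assumes "M \<in> QMax D (star_f D st)"
  shows "ideal_of D M" "0 \<in> M" "1 \<notin> M" "star_f D st M \<inter> D = M"
proof -
  have M: "quasi_ideal D (star_f D st) M" "M \<noteq> D" using assms unfolding QMax_def by auto
  then show "ideal_of D M" "star_f D st M \<inter> D = M" unfolding quasi_ideal_def by auto
  then show "0 \<in> M" "1 \<notin> M" using M(2) ideal_one_eq unfolding ideal_of_def submodule_def by auto
qed

lemma star_f_closure_quasi:
  assumes Q: "ideal_of D Q" "Q \<noteq> {0}" and one: "1 \<notin> star_f D st Q"
  shows "quasi_ideal D (star_f D st) (star_f D st Q \<inter> D)" "star_f D st Q \<inter> D \<noteq> D"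
    "Q \<subseteq> star_f D st Q \<inter> D"
proof -
  define I where "I = star_f D st Q \<inter> D"
  have Qs: "submodule D Q" using Q unfolding ideal_of_def by blast
  have QI: "Q \<subseteq> I" using subset_star_f[OF Qs Q(2)] Q(1) unfolding I_def ideal_of_def by blast
  have Is: "submodule D I"
    unfolding I_def by (rule submodule_Int[OF star_f_submodule[OF Qs Q(2)] subring_submodule[OF subring_D]])
  have Inz: "I \<noteq> {0}" using QI Q(2) Qs unfolding submodule_def by blast
  have "star_f D st I \<subseteq> star_f D st Q" by (rule star_f_star_f_subset[OF Qs Q(2)]) (simp add: I_def)
  then have "star_f D st I \<inter> D = I" using subset_star_f[OF Is Inz] unfolding I_def by blast
  then show "quasi_ideal D (star_f D st) I" unfolding quasi_ideal_def ideal_of_def using Is Inz I_def by blast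
  show "I \<noteq> D" "Q \<subseteq> I" using one one_in_D QI unfolding I_def by blast+
qed

lemma fg_below_chain:
  assumes F: "F \<in> fgset D" "F \<subseteq> \<Union>C" and C: "C \<noteq> {}" "subset.chain A C"
    and sub: "\<And>J. J \<in> C \<Longrightarrow> submodule D J"
  shows "\<exists>J\<in>C. F \<subseteq> J"
proof -
  obtain S where S: "finite S" "F = gen_mod D S" "S \<subseteq> F" using fg_generators[OF F(1)] by blast
  then obtain J where "J \<in> C" "S \<subseteq> J" using finite_subset_Union_chain[OF S(1) _ C] F(2) by blast
  then show ?thesis using S(2) gen_mod_least sub by blast
qed

lemma chain_Union_quasi:
  assumes C: "C \<noteq> {}" "subset.chain A C"
    and J: "\<And>J. J \<in> C \<Longrightarrow> quasi_ideal D (star_f D st) J \<and> J \<noteq> D"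
  shows "quasi_ideal D (star_f D st) (\<Union>C)" "\<Union>C \<noteq> D"
proof -
  have sub: "submodule D J" "J \<subseteq> D" "J \<noteq> {0}" "1 \<notin> J" "star_f D st J \<inter> D = J"
    if "J \<in> C" for J
  proof -
    have "ideal_of D J" "J \<noteq> {0}" "star_f D st J \<inter> D = J" "J \<noteq> D"
      using J[OF that] unfolding quasi_ideal_def by auto
    then show "submodule D J" "J \<subseteq> D" "J \<noteq> {0}" "1 \<notin> J" "star_f D st J \<inter> D = J"
      using ideal_one_eq unfolding ideal_of_def by auto
  qed
  have U: "submodule D (\<Union>C)" by (rule submodule_chain_Union[OF C sub(1)])
  have "\<Union>C \<noteq> {0}" using C(1) sub(1,3) unfolding submodule_def by blast
  moreover have "star_f D st (\<Union>C) \<inter> D \<subseteq> \<Union>C"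
  proof
    fix x assume x: "x \<in> star_f D st (\<Union>C) \<inter> D"
    then have "x \<in> star_f D st (\<Union>C)" by blast
    then obtain F where F: "F \<in> fgset D" "F \<subseteq> \<Union>C" "x \<in> st F" unfolding star_f_iff by blast
    then obtain J where J: "J \<in> C" "F \<subseteq> J" using fg_below_chain[OF _ _ C sub(1)] by blast
    then have "x \<in> star_f D st J" unfolding star_f_iff using F(1,3) by blast
    then show "x \<in> \<Union>C" using x J(1) sub(5)[OF J(1)] by blast
  qed
  moreover have "\<Union>C \<subseteq> star_f D st (\<Union>C)" using subset_star_f[OF U] calculation(1) by blast
  ultimately show "quasi_ideal D (star_f D st) (\<Union>C)"
    unfolding quasi_ideal_def ideal_of_def using U sub(2) by blast
  show "\<Union>C \<noteq> D" using sub(4) one_in_D by blast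
qed

lemma exists_QMax_above:
  assumes Q: "ideal_of D Q" "Q \<noteq> {0}" and one: "1 \<notin> star_f D st Q"
  shows "\<exists>M\<in>QMax D (star_f D st). Q \<subseteq> M"
proof -
  define T where "T = {J. quasi_ideal D (star_f D st) J \<and> J \<noteq> D \<and> Q \<subseteq> J}"
  have "star_f D st Q \<inter> D \<in> T" unfolding T_def using star_f_closure_quasi[OF Q one] by blast
  moreover have "\<Union>C \<in> T" if "C \<noteq> {}" "subset.chain T C" for C
  proof -
    have CT: "C \<subseteq> T" using that(2) by (auto simp: subset.chain_def)
    then have "quasi_ideal D (star_f D st) J \<and> J \<noteq> D" if "J \<in> C" for J
      using that unfolding T_def by blast
    then have "quasi_ideal D (star_f D st) (\<Union>C)" "\<Union>C \<noteq> D"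
      using chain_Union_quasi[OF \<open>C \<noteq> {}\<close> \<open>subset.chain T C\<close>] by blast+
    moreover have "Q \<subseteq> \<Union>C" using CT \<open>C \<noteq> {}\<close> unfolding T_def by blast
    ultimately show ?thesis unfolding T_def by blast
  qed
  ultimately obtain M where M: "M \<in> T" "\<forall>X\<in>T. M \<subseteq> X \<longrightarrow> X = M"
    using subset_Zorn_nonempty[of T] by blast
  then have "M \<in> QMax D (star_f D st)" unfolding QMax_def T_def by blast
  then show ?thesis using M(1) unfolding T_def by blast
qed

lemma tilde_subset_ext_loc: "M \<in> QMax D (star_f D st) \<Longrightarrow> tilde D st E \<subseteq> ext_loc D M E"
  unfolding tilde_def by blast

lemma subset_tilde: "E \<subseteq> tilde D st E"
proof
  fix q assume "q \<in> E"
  have "q = q / 1" by simp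
  then show "q \<in> tilde D st E"
    unfolding tilde_def ext_loc_def using \<open>q \<in> E\<close> one_in_D QMax_props(3) by blast
qed

lemma one_in_tilde:
  assumes "E \<subseteq> D" "\<And>M. M \<in> QMax D (star_f D st) \<Longrightarrow> \<not> E \<subseteq> M"
  shows "1 \<in> tilde D st E"
  unfolding tilde_def
proof (rule InterI)
  fix X assume "X \<in> {ext_loc D M E | M. M \<in> QMax D (star_f D st)}"
  then obtain M where M: "M \<in> QMax D (star_f D st)" "X = ext_loc D M E" by blast
  obtain s where s: "s \<in> E" "s \<notin> M" using assms(2)[OF M(1)] by blast
  then have "s \<noteq> 0" "1 = s / s" using QMax_props(2)[OF M(1)] by auto
  then show "1 \<in> X" unfolding M(2) ext_loc_def using s assms(1) by blast
qed

lemma QSpec_tilde_below_QMax: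
  assumes "P \<in> QSpec D (tilde D st)"
  shows "\<exists>M\<in>QMax D (star_f D st). P \<subseteq> M"
proof (rule ccontr)
  assume none: "\<not> (\<exists>M\<in>QMax D (star_f D st). P \<subseteq> M)"
  have P: "quasi_ideal D (tilde D st) P" "prime_ideal D P" using assms unfolding QSpec_def by auto
  then have "P \<subseteq> D" unfolding quasi_ideal_def ideal_of_def by blast
  then have "1 \<in> tilde D st P" using none by (intro one_in_tilde) auto
  then have "1 \<in> P" using P(1) one_in_D unfolding quasi_ideal_def by blast
  then show False using P(2) unfolding prime_ideal_def by blast
qed

lemma prime_below_QMax_QSpec_tilde:
  assumes Q: "prime_ideal D Q" "Q \<noteq> {0}" and M: "M \<in> QMax D (star_f D st)" "Q \<subseteq> M"
  shows "Q \<in> QSpec D (tilde D st)"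
proof -
  have "tilde D st Q \<inter> D \<subseteq> Q"
  proof
    fix x assume x: "x \<in> tilde D st Q \<inter> D"
    then obtain e s where es: "x = e / s" "e \<in> Q" "s \<in> D" "s \<notin> M"
      using tilde_subset_ext_loc[OF M(1)] unfolding ext_loc_def by blast
    then have "x * s \<in> Q" using QMax_props(2)[OF M(1)] by (metis nonzero_eq_divide_eq)
    then show "x \<in> Q" using Q(1) x es M(2) unfolding prime_ideal_def by blast
  qed
  then have "tilde D st Q \<inter> D = Q" using subset_tilde Q(1) unfolding prime_ideal_def ideal_of_def by blast
  then show ?thesis unfolding QSpec_def quasi_ideal_def using Q by (simp add: prime_ideal_def)
qed

subsection \<open>Comparison of the two families of valuation rings\<close>

lemma valuation_of_localization_is_tilde_valuation:
  assumes P: "P \<in> QSpec D (tilde D st)" and V: "valuation_overring (localization D P) V"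
  shows "star_valuation_overring D (tilde D st) V"
proof -
  have LV: "localization D P \<subseteq> V" using V unfolding valuation_overring_def by blast
  have DL: "D \<subseteq> localization D P"
    using subset_localization[OF subring_D] P unfolding QSpec_def prime_ideal_def by blast
  obtain M where M: "M \<in> QMax D (star_f D st)" "P \<subseteq> M" using QSpec_tilde_below_QMax[OF P] by blast
  have "tilde D st F \<subseteq> gen_mod V F" for F
  proof
    fix x assume "x \<in> tilde D st F"
    then obtain e s where es: "x = e / s" "e \<in> F" "s \<in> D" "s \<notin> M"
      using tilde_subset_ext_loc[OF M(1)] unfolding ext_loc_def by blast
    then have "1 / s \<in> V" using LV M(2) one_in_D unfolding localization_def by blast
    then show "x \<in> gen_mod V F" using gen_mod_single[of "1 / s" V e F] es by simp
  qed
  then show ?thesis using V DL unfolding star_valuation_overring_def valuation_overring_def by blast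
qed

lemma tilde_valuation_center:
  assumes V: "star_valuation_overring D (tilde D st) V"
  shows "V = UNIV \<or> (\<exists>Q\<in>QSpec D (tilde D st). valuation_overring (localization D Q) V)"
proof -
  have Vs: "subring V" "D \<subseteq> V" and val: "\<And>x. x \<noteq> 0 \<Longrightarrow> x \<in> V \<or> inverse x \<in> V"
    and tildeV: "\<And>F. F \<in> fgset D \<Longrightarrow> tilde D st F \<subseteq> gen_mod V F"
    using V unfolding star_valuation_overring_def valuation_overring_def by auto
  define Q where "Q = nonunits V \<inter> D"
  have Qprime: "prime_ideal D Q" unfolding Q_def by (rule center_prime[OF Vs(1) val subring_D Vs(2)])
  show ?thesis
  proof (cases "Q = {0}")
    case True then show ?thesis using center_zero_UNIV[OF Vs(1) domain Vs(2)] Q_def by blast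
  next
    case False
    text \<open>No F \<in> f(D) inside Q has 1 \<in> F^\<star>: otherwise 1 \<in> F^~ \<subseteq> FV \<subseteq> nonunits V.\<close>
    have "1 \<notin> star_f D st Q"
    proof
      assume "1 \<in> star_f D st Q"
      then obtain F where F: "F \<in> fgset D" "F \<subseteq> Q" "1 \<in> st F" unfolding star_f_iff by blast
      have "\<not> F \<subseteq> M" if M: "M \<in> QMax D (star_f D st)" for M
      proof
        assume "F \<subseteq> M"
        then have "1 \<in> star_f D st M" unfolding star_f_iff using F(1,3) by blast
        then show False using QMax_props(3,4)[OF M] one_in_D by blast
      qed
      moreover have "F \<subseteq> D" using F(2) unfolding Q_def by blast
      ultimately have "1 \<in> tilde D st F" using one_in_tilde by blast
      moreover have "gen_mod V F \<subseteq> nonunits V"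
        using gen_mod_least[OF nonunits_submodule[OF Vs(1) val]] F(2) unfolding Q_def by blast
      ultimately show False using tildeV[OF F(1)] one_notin_nonunits[OF Vs(1)] by blast
    qed
    moreover have "ideal_of D Q" using Qprime unfolding prime_ideal_def by blast
    ultimately obtain M where "M \<in> QMax D (star_f D st)" "Q \<subseteq> M"
      using exists_QMax_above False by blast
    then have "Q \<in> QSpec D (tilde D st)" using prime_below_QMax_QSpec_tilde[OF Qprime False] by blast
    moreover have "valuation_overring (localization D Q) V"
      using localization_center_subset[OF Vs] Vs val unfolding Q_def valuation_overring_def by blast
    ultimately show ?thesis by blast
  qed
qed

end

theorem lemma2p5:
  fixes D :: "'k::field set" and st :: "'k set \<Rightarrow> 'k set"
  assumes "domain_with_qf D"
    and "semistar D st"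
  shows "star_dim_v D (tilde D st) = (SUP P \<in> QSpec D (tilde D st). dim_v (localization D P))"
proof -
  interpret semistar_domain D st using assms by unfold_locales
  let ?RHS = "SUP P \<in> QSpec D (tilde D st). dim_v (localization D P)"
  have "krull_dim V \<le> ?RHS" if V: "star_valuation_overring D (tilde D st) V" for V
  proof (cases "V = UNIV")
    case True
    then show ?thesis using krull_dim_field[where 'k='k] by (metis order_trans zero_le)
  next
    case False
    then obtain Q where Q: "Q \<in> QSpec D (tilde D st)" "valuation_overring (localization D Q) V"
      using tilde_valuation_center[OF V] by blast
    then have "krull_dim V \<le> dim_v (localization D Q)" unfolding dim_v_def by (intro SUP_upper) simp
    also have "\<dots> \<le> ?RHS" using Q(1) by (rule SUP_upper)
    finally show ?thesis .
  qed
  then have "star_dim_v D (tilde D st) \<le> ?RHS" unfolding star_dim_v_def by (intro SUP_least) simp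
  moreover have "dim_v (localization D P) \<le> star_dim_v D (tilde D st)"
    if "P \<in> QSpec D (tilde D st)" for P
    unfolding dim_v_def star_dim_v_def
    using valuation_of_localization_is_tilde_valuation[OF that] by (intro SUP_least SUP_upper) simp_all
  then have "?RHS \<le> star_dim_v D (tilde D st)" by (intro SUP_least)
  ultimately show ?thesis by (rule antisym)
qed

end
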